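(* Let $R$ be a commutative Noetherian ring with $1$ in which linear equations are solvable, let $>$ be a local degree ordering on $\operatorname{Mon}_n$, let $I$ be an ideal of $R[x_1,\ldots,x_n]$, and let $G$ be a standard basis (respectively a strong standard basis) of $I$ with respect to $>$. Then $G$ is a standard basis (respectively a strong standard basis) of $I\,R[[x_1,\ldots,x_n]]$.
   Context: Linear equations are solvable in $R$ means: for any $a,a_1,\ldots,a_m\in R$ there are algorithms to compute generators of $\{(b_1,\ldots,b_m)\in R^m:\sum a_ib_i=0\}$, to decide whether $a\in\langle a_1,\ldots,a_m\rangle$, and if so to compute $b_i$ with $a=\sum b_ia_i$. A monomial ordering is a total ordering $>$ on $\operatorname{Mon}_n=\{x^\alpha\}$ compatible with multiplication; it is local if $x^\alpha<1$ for all $\alpha\neq0$, and a local degree ordering if it is local and $x^\alpha>x^\beta$ implies $\deg x^\alpha\le\deg x^\beta$. For a nonzero polynomial or power series $f=\sum_{v\ge0}a_vx^{\alpha_v}$ with $a_v\neq0$ and $x^{\alpha_0}>x^{\alpha_1}>\cdots$, $LM(f)=x^{\alpha_0}$, $LC(f)=a_0$, $LT(f)=a_0x^{\alpha_0}$. $S_>=\{u\in R[x_1,\ldots,x_n]\setminus\{0\}:LT(u)=1\}$, $R[x_1,\ldots,x_n]_>=S_>^{-1}R[x_1,\ldots,x_n]$, which (for local $>$) is naturally contained in $R[[x_1,\ldots,x_n]]$; for $f\in R[x_1,\ldots,x_n]_>$, $LT(f):=LT(uf)$ for $u\in S_>$ with $uf$ a polynomial. For a set $G$, $L(G)$ is the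 ideal of $R[x_1,\ldots,x_n]$ generated by $\{LT(g):g\in G\}$. A standard basis of an ideal $I$ of $R[x_1,\ldots,x_n]$ means a standard basis of $I\,R[x_1,\ldots,x_n]_>$. For an ideal $J$ (of $R[x_1,\ldots,x_n]_>$ or of $R[[x_1,\ldots,x_n]]$), a finite set $G=\{g_1,\ldots,g_t\}$ is a standard basis of $J$ if $G\subseteq J$ and $L(G)=L(J)$, and a strong standard basis if $G\subseteq J$ and for every $f\in J\setminus\{0\}$ there is $i$ with $LT(g_i)$ dividing $LT(f)$ (i.e. $LT(f)=c\,x^\gamma LT(g_i)$ for some $c\in R$, $x^\gamma\in\operatorname{Mon}_n$). *)

theory Defs
  imports Main
begin

text \<open>Variables x_1..x_n are indexed by a finite type 'v (n = CARD('v)). Power series over R are arbitrary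
  coefficient functions; polynomials are those with finite support.\<close>

type_synonym ('v, 'a) ser = "('v \<Rightarrow> nat) \<Rightarrow> 'a"

definition ser_zero :: "('v, 'a::zero) ser" where
  "ser_zero = (\<lambda>_. 0)"

definition ser_add :: "('v, 'a::plus) ser \<Rightarrow> ('v, 'a) ser \<Rightarrow> ('v, 'a) ser" where
  "ser_add f g = (\<lambda>\<alpha>. f \<alpha> + g \<alpha>)"

definition ser_mult :: "('v::finite, 'a::comm_ring_1) ser \<Rightarrow> ('v, 'a) ser \<Rightarrow> ('v, 'a) ser" where
  "ser_mult f g = (\<lambda>\<gamma>. \<Sum>\<alpha>\<in>{\<alpha>. \<forall>i. \<alpha> i \<le> \<gamma> i}. f \<alpha> * g (\<lambda>i. \<gamma> i - \<alpha> i))"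

definition monom_term :: "'a::zero \<Rightarrow> ('v \<Rightarrow> nat) \<Rightarrow> ('v, 'a) ser" where
  "monom_term c \<gamma> = (\<lambda>\<alpha>. if \<alpha> = \<gamma> then c else 0)"

definition ser_one :: "('v, 'a::{zero,one}) ser" where
  "ser_one = monom_term 1 (\<lambda>_. 0)"

definition is_poly :: "('v, 'a::zero) ser \<Rightarrow> bool" where
  "is_poly f \<longleftrightarrow> finite {\<alpha>. f \<alpha> \<noteq> 0}"

definition mdeg :: "('v::finite \<Rightarrow> nat) \<Rightarrow> nat" where
  "mdeg \<alpha> = (\<Sum>i\<in>UNIV. \<alpha> i)"

text \<open>gt \<alpha> \<beta> means x^\<alpha> > x^\<beta>.\<close>
definition monomial_ordering :: "(('v \<Rightarrow> nat) \<Rightarrow> ('v \<Rightarrow> nat) \<Rightarrow> bool) \<Rightarrow> bool" where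
  "monomial_ordering gt \<longleftrightarrow>
     (\<forall>\<alpha>. \<not> gt \<alpha> \<alpha>) \<and>
     (\<forall>\<alpha> \<beta> \<gamma>. gt \<alpha> \<beta> \<longrightarrow> gt \<beta> \<gamma> \<longrightarrow> gt \<alpha> \<gamma>) \<and>
     (\<forall>\<alpha> \<beta>. \<alpha> \<noteq> \<beta> \<longrightarrow> gt \<alpha> \<beta> \<or> gt \<beta> \<alpha>) \<and>
     (\<forall>\<alpha> \<beta> \<gamma>. gt \<alpha> \<beta> \<longrightarrow> gt (\<lambda>i. \<alpha> i + \<gamma> i) (\<lambda>i. \<beta> i + \<gamma> i))"

definition local_ordering :: "(('v \<Rightarrow> nat) \<Rightarrow> ('v \<Rightarrow> nat) \<Rightarrow> bool) \<Rightarrow> bool" where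
  "local_ordering gt \<longleftrightarrow> monomial_ordering gt \<and> (\<forall>\<alpha>. \<alpha> \<noteq> (\<lambda>_. 0) \<longrightarrow> gt (\<lambda>_. 0) \<alpha>)"

definition local_degree_ordering :: "(('v::finite \<Rightarrow> nat) \<Rightarrow> ('v \<Rightarrow> nat) \<Rightarrow> bool) \<Rightarrow> bool" where
  "local_degree_ordering gt \<longleftrightarrow> local_ordering gt \<and> (\<forall>\<alpha> \<beta>. gt \<alpha> \<beta> \<longrightarrow> mdeg \<alpha> \<le> mdeg \<beta>)"

definition LM :: "(('v \<Rightarrow> nat) \<Rightarrow> ('v \<Rightarrow> nat) \<Rightarrow> bool) \<Rightarrow> ('v, 'a::zero) ser \<Rightarrow> ('v \<Rightarrow> nat)" where
  "LM gt f = (THE \<alpha>. f \<alpha> \<noteq> 0 \<and> (\<forall>\<beta>. f \<beta> \<noteq> 0 \<and> \<beta> \<noteq> \<alpha> \<longrightarrow> gt \<alpha> \<beta>))"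

definition LC :: "(('v \<Rightarrow> nat) \<Rightarrow> ('v \<Rightarrow> nat) \<Rightarrow> bool) \<Rightarrow> ('v, 'a::zero) ser \<Rightarrow> 'a" where
  "LC gt f = f (LM gt f)"

definition LT :: "(('v \<Rightarrow> nat) \<Rightarrow> ('v \<Rightarrow> nat) \<Rightarrow> bool) \<Rightarrow> ('v, 'a::zero) ser \<Rightarrow> ('v, 'a) ser" where
  "LT gt f = monom_term (LC gt f) (LM gt f)"

definition ring_ideal :: "'a::comm_ring_1 set \<Rightarrow> bool" where
  "ring_ideal J \<longleftrightarrow> 0 \<in> J \<and> (\<forall>a\<in>J. \<forall>b\<in>J. a + b \<in> J) \<and> (\<forall>r. \<forall>a\<in>J. r * a \<in> J)"

definition noetherian :: "'a::comm_ring_1 itself \<Rightarrow> bool" where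
  "noetherian _ \<longleftrightarrow> (\<forall>J::'a set. ring_ideal J \<longrightarrow>
      (\<exists>F. finite F \<and> J = {\<Sum>a\<in>F. r a * a | r. True}))"

definition poly_ideal :: "('v::finite, 'a::comm_ring_1) ser set \<Rightarrow> bool" where
  "poly_ideal I \<longleftrightarrow> (\<forall>f\<in>I. is_poly f) \<and> ser_zero \<in> I \<and>
     (\<forall>f\<in>I. \<forall>g\<in>I. ser_add f g \<in> I) \<and>
     (\<forall>p f. is_poly p \<longrightarrow> f \<in> I \<longrightarrow> ser_mult p f \<in> I)"

definition poly_ideal_gen :: "('v::finite, 'a::comm_ring_1) ser set \<Rightarrow> ('v, 'a) ser set" where
  "poly_ideal_gen F = \<Inter>{J. poly_ideal J \<and> F \<subseteq> J}"

definition ser_ideal :: "('v::finite, 'a::comm_ring_1) ser set \<Rightarrow> bool" where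
  "ser_ideal J \<longleftrightarrow> ser_zero \<in> J \<and> (\<forall>f\<in>J. \<forall>g\<in>J. ser_add f g \<in> J) \<and>
     (\<forall>h f. f \<in> J \<longrightarrow> ser_mult h f \<in> J)"

text \<open>I R[[x]]: the ideal of R[[x]] generated by I.\<close>
definition ser_ideal_gen :: "('v::finite, 'a::comm_ring_1) ser set \<Rightarrow> ('v, 'a) ser set" where
  "ser_ideal_gen F = \<Inter>{J. ser_ideal J \<and> F \<subseteq> J}"

text \<open>S_> and I R[x]_> = S_>^{-1} I, viewed inside R[[x]].\<close>
definition S_gt :: "(('v \<Rightarrow> nat) \<Rightarrow> ('v \<Rightarrow> nat) \<Rightarrow> bool) \<Rightarrow> ('v, 'a::{zero,one}) ser set" where
  "S_gt gt = {u. is_poly u \<and> u \<noteq> ser_zero \<and> LT gt u = ser_one}"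

definition loc_ideal :: "(('v::finite \<Rightarrow> nat) \<Rightarrow> ('v \<Rightarrow> nat) \<Rightarrow> bool) \<Rightarrow> ('v, 'a::comm_ring_1) ser set \<Rightarrow> ('v, 'a) ser set" where
  "loc_ideal gt I = {h. \<exists>u\<in>S_gt gt. ser_mult u h \<in> I}"

definition Lid :: "(('v::finite \<Rightarrow> nat) \<Rightarrow> ('v \<Rightarrow> nat) \<Rightarrow> bool) \<Rightarrow> ('v, 'a::comm_ring_1) ser set \<Rightarrow> ('v, 'a) ser set" where
  "Lid gt G = poly_ideal_gen (LT gt ` (G - {ser_zero}))"

definition standard_basis :: "(('v::finite \<Rightarrow> nat) \<Rightarrow> ('v \<Rightarrow> nat) \<Rightarrow> bool) \<Rightarrow> ('v, 'a::comm_ring_1) ser set \<Rightarrow> ('v, 'a) ser set \<Rightarrow> bool" where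
  "standard_basis gt G J \<longleftrightarrow> finite G \<and> G \<subseteq> J \<and> Lid gt G = Lid gt J"

definition strong_standard_basis :: "(('v::finite \<Rightarrow> nat) \<Rightarrow> ('v \<Rightarrow> nat) \<Rightarrow> bool) \<Rightarrow> ('v, 'a::comm_ring_1) ser set \<Rightarrow> ('v, 'a) ser set \<Rightarrow> bool" where
  "strong_standard_basis gt G J \<longleftrightarrow> finite G \<and> G \<subseteq> J \<and>
     (\<forall>f\<in>J - {ser_zero}. \<exists>g\<in>G. \<exists>c \<gamma>. LT gt f = ser_mult (monom_term c \<gamma>) (LT gt g))"

end

theory Submission
  imports Defs "HOL-Library.FuncSet" "HOL-Library.Function_Algebras"
begin

text \<open>A polynomial u with LT(u) = 1 has constant term 1, hence is a unit of R[[x]]; so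
  I R[x]_> is contained in I R[[x]]. Conversely, the series that agree with an element of I
  in all degrees up to d, for every d, form an ideal of R[[x]] containing I, hence containing
  I R[[x]]. For a local degree ordering, every monomial of degree larger than deg LM(f) is
  smaller than LM(f), so LT(f) only depends on the coefficients of f in degrees up to
  deg LM(f); thus every leading term of I R[[x]] is already a leading term of I. The two
  ideals therefore have the same leading terms, and a (strong) standard basis of one is one
  of the other.\<close>

lemma finite_atMost_exponent: "finite {..\<gamma> :: 'v::finite \<Rightarrow> nat}"
proof -
  have "{..\<gamma>} = Pi\<^sub>E UNIV (\<lambda>i. {..\<gamma> i})"
    by (auto simp: le_fun_def PiE_def Pi_def extensional_def)
  then show ?thesis by (simp add: finite_PiE)
qed

lemma atMost_exponent_0: "{..0 :: 'v \<Rightarrow> nat} = {0}"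
  by (auto simp: le_fun_def fun_eq_iff)

lemma finite_mdeg_le: "finite {\<alpha> :: 'v::finite \<Rightarrow> nat. mdeg \<alpha> \<le> d}"
proof (rule finite_subset[OF _ finite_atMost_exponent])
  show "{\<alpha> :: 'v \<Rightarrow> nat. mdeg \<alpha> \<le> d} \<subseteq> {..\<lambda>_. d}"
  proof
    fix \<alpha> :: "'v \<Rightarrow> nat" assume "\<alpha> \<in> {\<alpha>. mdeg \<alpha> \<le> d}"
    moreover have "\<alpha> i \<le> mdeg \<alpha>" for i unfolding mdeg_def by (rule member_le_sum) simp_all
    ultimately show "\<alpha> \<in> {..\<lambda>_. d}" by (simp add: le_fun_def) (meson order_trans)
  qed
qed

lemma mdeg_mono: "\<alpha> \<le> \<gamma> \<Longrightarrow> mdeg \<alpha> \<le> mdeg (\<gamma> :: 'v::finite \<Rightarrow> nat)"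
  unfolding mdeg_def le_fun_def by (rule sum_mono) auto

lemma mdeg_strict_mono: "\<alpha> < \<gamma> \<Longrightarrow> mdeg \<alpha> < mdeg (\<gamma> :: 'v::finite \<Rightarrow> nat)"
proof -
  assume "\<alpha> < \<gamma>"
  then obtain j where "\<alpha> \<le> \<gamma>" "\<alpha> j < \<gamma> j"
    by (auto simp: less_fun_def le_fun_def not_le)
  then show ?thesis
    unfolding mdeg_def by (intro sum_strict_mono_ex1) (auto simp: le_fun_def)
qed

lemma mdeg_diff_le: "mdeg (\<gamma> - \<alpha>) \<le> mdeg (\<gamma> :: 'v::finite \<Rightarrow> nat)"
  unfolding mdeg_def by (rule sum_mono) simp

lemma ser_mult_apply: "ser_mult f g \<gamma> = (\<Sum>\<alpha>\<le>\<gamma>. f \<alpha> * g (\<gamma> - \<alpha>))"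
  unfolding ser_mult_def atMost_def le_fun_def fun_diff_def ..

lemma ser_one_apply: "ser_one \<alpha> = (if \<alpha> = 0 then 1 else 0)"
  by (simp add: ser_one_def monom_term_def zero_fun_def)

lemma ser_mult_assoc:
  fixes f g h :: "('v::finite, 'a::comm_ring_1) ser"
  shows "ser_mult (ser_mult f g) h = ser_mult f (ser_mult g h)"
proof
  fix \<gamma> :: "'v \<Rightarrow> nat"
  have "ser_mult (ser_mult f g) h \<gamma> = (\<Sum>\<alpha>\<le>\<gamma>. \<Sum>\<beta>\<le>\<alpha>. f \<beta> * g (\<alpha> - \<beta>) * h (\<gamma> - \<alpha>))"
    by (simp add: ser_mult_apply sum_distrib_right)
  also have "\<dots> = (\<Sum>\<alpha>\<le>\<gamma>. \<Sum>\<beta>\<in>{\<beta>\<in>{..\<gamma>}. \<beta> \<le> \<alpha>}. f \<beta> * g (\<alpha> - \<beta>) * h (\<gamma> - \<alpha>))"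
    by (intro sum.cong refl arg_cong[where f = "\<lambda>A. sum _ A"]) auto
  also have "\<dots> = (\<Sum>\<beta>\<le>\<gamma>. \<Sum>\<alpha>\<in>{\<alpha>\<in>{..\<gamma>}. \<beta> \<le> \<alpha>}. f \<beta> * g (\<alpha> - \<beta>) * h (\<gamma> - \<alpha>))"
    by (rule sum.swap_restrict) (simp_all add: finite_atMost_exponent)
  also have "\<dots> = (\<Sum>\<beta>\<le>\<gamma>. \<Sum>\<delta>\<le>\<gamma> - \<beta>. f \<beta> * g \<delta> * h (\<gamma> - \<beta> - \<delta>))"
  proof (rule sum.cong[OF refl])
    fix \<beta> assume "\<beta> \<in> {..\<gamma>}"
    then have "bij_betw ((+) \<beta>) {..\<gamma> - \<beta>} {\<alpha>\<in>{..\<gamma>}. \<beta> \<le> \<alpha>}"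
      by (intro bij_betw_byWitness[where f' = "\<lambda>\<alpha>. \<alpha> - \<beta>"])
        (auto simp: le_fun_def fun_eq_iff le_diff_conv2 add.commute intro: diff_le_mono)
    then show "(\<Sum>\<alpha>\<in>{\<alpha>\<in>{..\<gamma>}. \<beta> \<le> \<alpha>}. f \<beta> * g (\<alpha> - \<beta>) * h (\<gamma> - \<alpha>))
        = (\<Sum>\<delta>\<le>\<gamma> - \<beta>. f \<beta> * g \<delta> * h (\<gamma> - \<beta> - \<delta>))"
      by (rule sum.reindex_bij_betw[symmetric, THEN trans]) (simp add: fun_eq_iff diff_diff_add)
  qed
  also have "\<dots> = ser_mult f (ser_mult g h) \<gamma>"
    by (simp add: ser_mult_apply sum_distrib_left mult.assoc)
  finally show "ser_mult (ser_mult f g) h \<gamma> = ser_mult f (ser_mult g h) \<gamma>" .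
qed

lemma ser_mult_one_left: "ser_mult ser_one g = (g :: ('v::finite, 'a::comm_ring_1) ser)"
proof
  fix \<gamma> :: "'v \<Rightarrow> nat"
  have "ser_mult ser_one g \<gamma> = (\<Sum>\<alpha>\<le>\<gamma>. if \<alpha> = 0 then g (\<gamma> - \<alpha>) else 0)"
    unfolding ser_mult_apply ser_one_apply by (rule sum.cong) simp_all
  also have "\<dots> = g (\<gamma> - 0)"
    by (simp add: sum.delta finite_atMost_exponent)
  finally show "ser_mult ser_one g \<gamma> = g \<gamma>" by (simp add: fun_diff_def zero_fun_def)
qed

text \<open>The coefficient at \<gamma> \<noteq> 0 is solved from (ser_inverse u * u)(\<gamma>) = 0, which needs
  u(0) = 1; for other u the result is not an inverse.\<close>
function ser_inverse :: "('v::finite, 'a::comm_ring_1) ser \<Rightarrow> ('v, 'a) ser" where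
  "ser_inverse u \<gamma> =
     (if \<gamma> = 0 then 1 else - (\<Sum>\<alpha><\<gamma>. ser_inverse u \<alpha> * u (\<gamma> - \<alpha>)))"
  by auto
termination
  by (relation "measure (\<lambda>(u, \<gamma>). mdeg \<gamma>)") (auto intro: mdeg_strict_mono)

declare ser_inverse.simps [simp del]

lemma ser_mult_inverse_left:
  assumes "u 0 = (1 :: 'a::comm_ring_1)"
  shows "ser_mult (ser_inverse u) u = (ser_one :: ('v::finite, 'a) ser)"
proof
  fix \<gamma> :: "'v \<Rightarrow> nat"
  show "ser_mult (ser_inverse u) u \<gamma> = ser_one \<gamma>"
  proof (cases "\<gamma> = 0")
    case True
    then show ?thesis
      using assms by (simp add: ser_mult_apply ser_one_apply atMost_exponent_0 ser_inverse.simps)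
  next
    case False
    have "{..\<gamma>} = insert \<gamma> {..<\<gamma>}" and "\<gamma> - \<gamma> = 0"
      by (auto simp: fun_eq_iff)
    moreover have "finite {..<\<gamma>}"
      by (rule finite_subset[OF _ finite_atMost_exponent[of \<gamma>]]) auto
    ultimately have "ser_mult (ser_inverse u) u \<gamma>
        = ser_inverse u \<gamma> * u 0 + (\<Sum>\<alpha><\<gamma>. ser_inverse u \<alpha> * u (\<gamma> - \<alpha>))"
      by (simp add: ser_mult_apply)
    also have "\<dots> = 0"
      using assms False by (subst ser_inverse.simps) simp
    finally show ?thesis using False by (simp add: ser_one_apply)
  qed
qed

lemma ser_mult_inverse_cancel:
  assumes "u 0 = (1 :: 'a::comm_ring_1)"
  shows "ser_mult (ser_inverse u) (ser_mult u g) = (g :: ('v::finite, 'a) ser)"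
  by (simp add: ser_mult_assoc[symmetric] ser_mult_inverse_left[of u, OF assms] ser_mult_one_left)

lemma ser_ideal_gen_mult: "f \<in> I \<Longrightarrow> ser_mult h f \<in> ser_ideal_gen I"
  unfolding ser_ideal_gen_def ser_ideal_def by blast

lemma S_gt_const_coeff:
  assumes "u \<in> S_gt gt"
  shows "u 0 = (1 :: 'a::comm_ring_1)"
proof -
  have "monom_term (LC gt u) (LM gt u) 0 = 1"
    using assms by (simp add: S_gt_def LT_def ser_one_apply)
  then have "LM gt u = 0" "LC gt u = 1"
    by (auto simp: monom_term_def split: if_splits)
  then show ?thesis by (simp add: LC_def)
qed

lemma loc_ideal_subset_ser_ideal_gen: "loc_ideal gt I \<subseteq> ser_ideal_gen I"
proof
  fix g assume "g \<in> loc_ideal gt I"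
  then obtain u where "u \<in> S_gt gt" and "ser_mult u g \<in> I"
    unfolding loc_ideal_def by blast
  then have "ser_mult (ser_inverse u) (ser_mult u g) \<in> ser_ideal_gen I"
    by (simp add: ser_ideal_gen_mult)
  then show "g \<in> ser_ideal_gen I"
    using ser_mult_inverse_cancel[of u, OF S_gt_const_coeff[OF \<open>u \<in> S_gt gt\<close>]] by simp
qed

lemma monomial_orderingD:
  assumes "monomial_ordering gt"
  shows monomial_ordering_irrefl: "\<not> gt \<alpha> \<alpha>"
    and monomial_ordering_trans: "gt \<alpha> \<beta> \<Longrightarrow> gt \<beta> \<gamma> \<Longrightarrow> gt \<alpha> \<gamma>"
    and monomial_ordering_total: "\<alpha> \<noteq> \<beta> \<Longrightarrow> gt \<alpha> \<beta> \<or> gt \<beta> \<alpha>"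
  using assms unfolding monomial_ordering_def by blast+

lemma local_degree_orderingD:
  assumes "local_degree_ordering gt"
  shows local_degree_ordering_monomial_ordering: "monomial_ordering gt"
    and local_degree_ordering_mdeg: "gt \<alpha> \<beta> \<Longrightarrow> mdeg \<alpha> \<le> mdeg \<beta>"
  using assms unfolding local_degree_ordering_def local_ordering_def by blast+

lemma monomial_ordering_finite_max:
  assumes "monomial_ordering gt" and "finite T" and "T \<noteq> {}"
  shows "\<exists>\<alpha>\<in>T. \<forall>\<beta>\<in>T. \<beta> \<noteq> \<alpha> \<longrightarrow> gt \<alpha> \<beta>"
  using assms(2,3)
proof (induction T rule: finite_ne_induct)
  case (insert x F)
  then obtain \<alpha> where "\<alpha> \<in> F" and max: "\<forall>\<beta>\<in>F. \<beta> \<noteq> \<alpha> \<longrightarrow> gt \<alpha> \<beta>" by blast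
  have "x \<noteq> \<alpha>" using \<open>\<alpha> \<in> F\<close> \<open>x \<notin> F\<close> by blast
  then consider "gt x \<alpha>" | "gt \<alpha> x" using monomial_ordering_total[OF assms(1)] by blast
  then show ?case
  proof cases
    case 1
    with max have "\<forall>\<beta>\<in>insert x F. \<beta> \<noteq> x \<longrightarrow> gt x \<beta>"
      using monomial_ordering_trans[OF assms(1), of x \<alpha>] by auto
    then show ?thesis by blast
  next
    case 2
    with max \<open>\<alpha> \<in> F\<close> show ?thesis by blast
  qed
qed simp

definition leading_exp :: "(('v \<Rightarrow> nat) \<Rightarrow> ('v \<Rightarrow> nat) \<Rightarrow> bool) \<Rightarrow> ('v, 'a::zero) ser
    \<Rightarrow> ('v \<Rightarrow> nat) \<Rightarrow> bool" where
  "leading_exp gt f \<alpha> \<longleftrightarrow> f \<alpha> \<noteq> 0 \<and> (\<forall>\<beta>. f \<beta> \<noteq> 0 \<and> \<beta> \<noteq> \<alpha> \<longrightarrow> gt \<alpha> \<beta>)"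

lemma LM_eqI:
  assumes "monomial_ordering gt" and "leading_exp gt f \<alpha>"
  shows "LM gt f = \<alpha>"
  unfolding LM_def
proof (rule the_equality)
  show "f \<alpha> \<noteq> 0 \<and> (\<forall>\<beta>. f \<beta> \<noteq> 0 \<and> \<beta> \<noteq> \<alpha> \<longrightarrow> gt \<alpha> \<beta>)"
    using assms(2) unfolding leading_exp_def .
  fix \<alpha>' assume "f \<alpha>' \<noteq> 0 \<and> (\<forall>\<beta>. f \<beta> \<noteq> 0 \<and> \<beta> \<noteq> \<alpha>' \<longrightarrow> gt \<alpha>' \<beta>)"
  with assms show "\<alpha>' = \<alpha>"
    unfolding leading_exp_def
    by (metis monomial_ordering_irrefl monomial_ordering_trans)
qed

text \<open>The leading exponent is found among the finitely many nonzero terms of least degree: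
  terms of higher degree are smaller because the ordering is a local degree ordering.\<close>
lemma leading_exp_exists:
  fixes f :: "('v::finite, 'a::zero) ser"
  assumes ldo: "local_degree_ordering gt" and "f \<noteq> ser_zero"
  shows "\<exists>\<alpha>. leading_exp gt f \<alpha>"
proof -
  note mo = local_degree_ordering_monomial_ordering[OF ldo]
  obtain \<alpha>0 where "f \<alpha>0 \<noteq> 0" using \<open>f \<noteq> ser_zero\<close> by (auto simp: ser_zero_def)
  define d where "d = (LEAST d. \<exists>\<alpha>. f \<alpha> \<noteq> 0 \<and> mdeg \<alpha> = d)"
  have "\<exists>\<alpha>. f \<alpha> \<noteq> 0 \<and> mdeg \<alpha> = d"
    unfolding d_def by (rule LeastI[of _ "mdeg \<alpha>0"]) (use \<open>f \<alpha>0 \<noteq> 0\<close> in blast)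
  moreover have d_min: "d \<le> mdeg \<beta>" if "f \<beta> \<noteq> 0" for \<beta>
    unfolding d_def by (rule Least_le) (use that in blast)
  define T where "T = {\<alpha>. f \<alpha> \<noteq> 0 \<and> mdeg \<alpha> = d}"
  have "finite T"
    unfolding T_def by (rule finite_subset[OF _ finite_mdeg_le[of d]]) auto
  moreover have "T \<noteq> {}" using calculation(1) unfolding T_def by blast
  ultimately obtain \<alpha> where "\<alpha> \<in> T" and max: "\<forall>\<beta>\<in>T. \<beta> \<noteq> \<alpha> \<longrightarrow> gt \<alpha> \<beta>"
    using monomial_ordering_finite_max[OF mo] by blast
  have "gt \<alpha> \<beta>" if "f \<beta> \<noteq> 0" and "\<beta> \<noteq> \<alpha>" for \<beta>
  proof (cases "mdeg \<beta> = d")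
    case True
    with that max show ?thesis unfolding T_def by blast
  next
    case False
    with d_min[OF \<open>f \<beta> \<noteq> 0\<close>] \<open>\<alpha> \<in> T\<close> have "mdeg \<alpha> < mdeg \<beta>" unfolding T_def by simp
    then show ?thesis
      using monomial_ordering_total[OF mo \<open>\<beta> \<noteq> \<alpha>\<close>] local_degree_ordering_mdeg[OF ldo, of \<beta> \<alpha>]
      by auto
  qed
  with \<open>\<alpha> \<in> T\<close> show ?thesis unfolding leading_exp_def T_def by blast
qed

lemma leading_exp_agree_upto:
  assumes ldo: "local_degree_ordering gt" and "leading_exp gt f \<alpha>"
    and agree: "\<And>\<beta>. mdeg \<beta> \<le> mdeg \<alpha> \<Longrightarrow> p \<beta> = f \<beta>"
  shows "leading_exp gt p \<alpha>"
  unfolding leading_exp_def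
proof (intro conjI allI impI)
  show "p \<alpha> \<noteq> 0" using assms(2) agree unfolding leading_exp_def by simp
  fix \<beta> assume "p \<beta> \<noteq> 0 \<and> \<beta> \<noteq> \<alpha>"
  then show "gt \<alpha> \<beta>"
    using assms(2) agree[of \<beta>] local_degree_ordering_mdeg[OF ldo, of \<beta> \<alpha>]
      monomial_ordering_total[OF local_degree_ordering_monomial_ordering[OF ldo], of \<alpha> \<beta>]
    unfolding leading_exp_def by fastforce
qed

lemma LT_agree_upto:
  fixes f :: "('v::finite, 'a::zero) ser"
  assumes ldo: "local_degree_ordering gt" and "f \<noteq> ser_zero"
    and agree: "\<And>\<beta>. mdeg \<beta> \<le> mdeg (LM gt f) \<Longrightarrow> p \<beta> = f \<beta>"
  shows "LT gt p = LT gt f" and "p \<noteq> ser_zero"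
proof -
  note mo = local_degree_ordering_monomial_ordering[OF ldo]
  obtain \<alpha> where f_lead: "leading_exp gt f \<alpha>" using leading_exp_exists[OF assms(1,2)] ..
  then have "LM gt f = \<alpha>" by (rule LM_eqI[OF mo])
  with agree have p_lead: "leading_exp gt p \<alpha>" by (intro leading_exp_agree_upto[OF ldo f_lead]) simp
  then have "LM gt p = \<alpha>" by (rule LM_eqI[OF mo])
  with \<open>LM gt f = \<alpha>\<close> agree show "LT gt p = LT gt f" by (simp add: LT_def LC_def)
  show "p \<noteq> ser_zero" using p_lead by (auto simp: leading_exp_def ser_zero_def)
qed

definition ser_trunc :: "nat \<Rightarrow> ('v::finite, 'a::zero) ser \<Rightarrow> ('v, 'a) ser" where
  "ser_trunc d f = (\<lambda>\<alpha>. if mdeg \<alpha> \<le> d then f \<alpha> else 0)"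

lemma is_poly_ser_trunc: "is_poly (ser_trunc d f)"
  unfolding is_poly_def ser_trunc_def
  by (rule finite_subset[OF _ finite_mdeg_le[of d]]) auto

lemma ser_mult_agree_upto:
  assumes "\<And>\<alpha>. mdeg \<alpha> \<le> d \<Longrightarrow> f \<alpha> = f' \<alpha>" and "\<And>\<alpha>. mdeg \<alpha> \<le> d \<Longrightarrow> g \<alpha> = g' \<alpha>"
    and "mdeg \<gamma> \<le> d"
  shows "ser_mult f g \<gamma> = ser_mult f' g' (\<gamma> :: 'v::finite \<Rightarrow> nat)"
  unfolding ser_mult_apply
proof (rule sum.cong[OF refl])
  fix \<alpha> assume "\<alpha> \<in> {..\<gamma>}"
  then have "mdeg \<alpha> \<le> d" and "mdeg (\<gamma> - \<alpha>) \<le> d"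
    using mdeg_mono[of \<alpha> \<gamma>] mdeg_diff_le[of \<gamma> \<alpha>] assms(3) by auto
  with assms(1,2) show "f \<alpha> * g (\<gamma> - \<alpha>) = f' \<alpha> * g' (\<gamma> - \<alpha>)" by simp
qed

definition adic_closure :: "('v::finite, 'a::comm_ring_1) ser set \<Rightarrow> ('v, 'a) ser set" where
  "adic_closure I = {f. \<forall>d. \<exists>p\<in>I. \<forall>\<alpha>. mdeg \<alpha> \<le> d \<longrightarrow> f \<alpha> = p \<alpha>}"

lemma ser_ideal_adic_closure:
  assumes "poly_ideal I"
  shows "ser_ideal (adic_closure I)"
  unfolding ser_ideal_def
proof (intro conjI ballI allI impI)
  show "ser_zero \<in> adic_closure I"
    using assms unfolding poly_ideal_def adic_closure_def by blast
next
  fix f g assume "f \<in> adic_closure I" and "g \<in> adic_closure I"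
  show "ser_add f g \<in> adic_closure I" unfolding adic_closure_def
  proof (intro CollectI allI)
    fix d
    obtain p where "p \<in> I" and "\<forall>\<alpha>. mdeg \<alpha> \<le> d \<longrightarrow> f \<alpha> = p \<alpha>"
      using \<open>f \<in> adic_closure I\<close> unfolding adic_closure_def by blast
    moreover obtain q where "q \<in> I" and "\<forall>\<alpha>. mdeg \<alpha> \<le> d \<longrightarrow> g \<alpha> = q \<alpha>"
      using \<open>g \<in> adic_closure I\<close> unfolding adic_closure_def by blast
    moreover from \<open>p \<in> I\<close> \<open>q \<in> I\<close> have "ser_add p q \<in> I"
      using assms unfolding poly_ideal_def by blast
    ultimately show "\<exists>r\<in>I. \<forall>\<alpha>. mdeg \<alpha> \<le> d \<longrightarrow> ser_add f g \<alpha> = r \<alpha>"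
      unfolding ser_add_def by auto
  qed
next
  fix h f assume "f \<in> adic_closure I"
  show "ser_mult h f \<in> adic_closure I" unfolding adic_closure_def
  proof (intro CollectI allI)
    fix d
    obtain p where "p \<in> I" and "\<forall>\<alpha>. mdeg \<alpha> \<le> d \<longrightarrow> f \<alpha> = p \<alpha>"
      using \<open>f \<in> adic_closure I\<close> unfolding adic_closure_def by blast
    then have "\<forall>\<gamma>. mdeg \<gamma> \<le> d \<longrightarrow> ser_mult h f \<gamma> = ser_mult (ser_trunc d h) p \<gamma>"
      by (auto intro: ser_mult_agree_upto simp: ser_trunc_def)
    moreover have "ser_mult (ser_trunc d h) p \<in> I"
      using assms \<open>p \<in> I\<close> is_poly_ser_trunc unfolding poly_ideal_def by blast
    ultimately show "\<exists>r\<in>I. \<forall>\<gamma>. mdeg \<gamma> \<le> d \<longrightarrow> ser_mult h f \<gamma> = r \<gamma>" by blast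
  qed
qed

lemma ser_ideal_gen_subset_adic_closure:
  assumes "poly_ideal I"
  shows "ser_ideal_gen I \<subseteq> adic_closure I"
proof -
  have "I \<subseteq> adic_closure I" unfolding adic_closure_def by blast
  with ser_ideal_adic_closure[OF assms] show ?thesis unfolding ser_ideal_gen_def by blast
qed

lemma one_in_S_gt:
  assumes "monomial_ordering gt"
  shows "(ser_one :: ('v::finite, 'a::comm_ring_1) ser) \<in> S_gt gt"
proof -
  have "leading_exp gt (ser_one :: ('v, 'a) ser) 0"
    by (simp add: leading_exp_def ser_one_apply)
  then have "LM gt (ser_one :: ('v, 'a) ser) = 0" by (rule LM_eqI[OF assms])
  then have LT_one: "LT gt (ser_one :: ('v, 'a) ser) = ser_one"
    unfolding LT_def LC_def by (simp add: ser_one_def zero_fun_def monom_term_def)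
  have "(ser_one :: ('v, 'a) ser) 0 \<noteq> ser_zero 0"
    by (simp add: ser_one_apply ser_zero_def)
  then have "(ser_one :: ('v, 'a) ser) \<noteq> ser_zero" by metis
  moreover have "{\<alpha>. ser_one \<alpha> \<noteq> (0::'a)} = {0 :: 'v \<Rightarrow> nat}"
    by (simp add: ser_one_apply)
  ultimately show ?thesis using LT_one unfolding S_gt_def is_poly_def by simp
qed

lemma subset_loc_ideal:
  assumes "monomial_ordering gt"
  shows "I \<subseteq> loc_ideal gt I"
proof
  fix p assume "p \<in> I"
  then have "ser_mult ser_one p \<in> I" by (simp add: ser_mult_one_left)
  with one_in_S_gt[OF assms] show "p \<in> loc_ideal gt I" unfolding loc_ideal_def by blast
qed

lemma LT_ser_ideal_gen_subset:
  assumes ldo: "local_degree_ordering gt" and "poly_ideal I"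
  shows "LT gt ` (ser_ideal_gen I - {ser_zero}) \<subseteq> LT gt ` (loc_ideal gt I - {ser_zero})"
proof
  fix t assume "t \<in> LT gt ` (ser_ideal_gen I - {ser_zero})"
  then obtain f where "f \<in> ser_ideal_gen I" "f \<noteq> ser_zero" and t: "t = LT gt f" by blast
  then obtain p where "p \<in> I" and agree: "\<forall>\<beta>. mdeg \<beta> \<le> mdeg (LM gt f) \<longrightarrow> f \<beta> = p \<beta>"
    using ser_ideal_gen_subset_adic_closure[OF \<open>poly_ideal I\<close>] unfolding adic_closure_def by blast
  then have "LT gt p = t" and "p \<noteq> ser_zero"
    using LT_agree_upto[OF ldo \<open>f \<noteq> ser_zero\<close>, of p] t by simp_all
  moreover have "p \<in> loc_ideal gt I"
    using \<open>p \<in> I\<close> subset_loc_ideal[OF local_degree_ordering_monomial_ordering[OF ldo]] by blast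
  ultimately show "t \<in> LT gt ` (loc_ideal gt I - {ser_zero})" by blast
qed

lemma Lid_mono:
  "LT gt ` (A - {ser_zero}) \<subseteq> LT gt ` (B - {ser_zero}) \<Longrightarrow> Lid gt A \<subseteq> Lid gt B"
  unfolding Lid_def poly_ideal_gen_def by blast

lemma standard_basis_of_LT_subset:
  assumes "standard_basis gt G J" and "J \<subseteq> K"
    and "LT gt ` (K - {ser_zero}) \<subseteq> LT gt ` (J - {ser_zero})"
  shows "standard_basis gt G K"
proof -
  from assms(1,2) have "G \<subseteq> K" and "Lid gt G = Lid gt J"
    unfolding standard_basis_def by blast+
  moreover from \<open>G \<subseteq> K\<close> have "Lid gt G \<subseteq> Lid gt K"
    by (intro Lid_mono) blast
  moreover have "Lid gt K \<subseteq> Lid gt J" using assms(3) by (rule Lid_mono)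
  ultimately show ?thesis using assms(1) unfolding standard_basis_def by blast
qed

lemma strong_standard_basis_of_LT_subset:
  assumes strong: "strong_standard_basis gt G J" and "J \<subseteq> K"
    and LT_sub: "LT gt ` (K - {ser_zero}) \<subseteq> LT gt ` (J - {ser_zero})"
  shows "strong_standard_basis gt G K"
proof -
  have "\<exists>g\<in>G. \<exists>c \<gamma>. LT gt f = ser_mult (monom_term c \<gamma>) (LT gt g)"
    if "f \<in> K - {ser_zero}" for f
  proof -
    from that LT_sub obtain p where "p \<in> J - {ser_zero}" and "LT gt f = LT gt p" by blast
    with strong show ?thesis unfolding strong_standard_basis_def by simp
  qed
  with strong \<open>J \<subseteq> K\<close> show ?thesis unfolding strong_standard_basis_def by blast
qed

theorem proposition7p1:
  fixes gt :: "('v::finite \<Rightarrow> nat) \<Rightarrow> ('v \<Rightarrow> nat) \<Rightarrow> bool"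
    and I G :: "('v, 'a::comm_ring_1) ser set"
  assumes "noetherian TYPE('a)"
    and "local_degree_ordering gt"
    and "poly_ideal I"
  shows "(standard_basis gt G (loc_ideal gt I) \<longrightarrow> standard_basis gt G (ser_ideal_gen I))
       \<and> (strong_standard_basis gt G (loc_ideal gt I) \<longrightarrow> strong_standard_basis gt G (ser_ideal_gen I))"
proof -
  note sub = loc_ideal_subset_ser_ideal_gen[of gt I]
  note LT_sub = LT_ser_ideal_gen_subset[OF assms(2,3)]
  show ?thesis
    using standard_basis_of_LT_subset[OF _ sub LT_sub]
      strong_standard_basis_of_LT_subset[OF _ sub LT_sub]
    by blast
qed

end
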